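(* For real $x$ define $$D(x)=\int_0^{\infty}\left(\frac{e^{tx}+t x\,e^{tx}}{\left(1+e^{tx}\right)^2}-2x\,e^{-t x^2}\right)dt+\int_0^{\infty}\left(2t x^3 e^{-t x^2}-\frac{2t x\,e^{2tx}}{\left(1+e^{tx}\right)^3}\right)dt .$$ Then for every $x\neq 0$ both improper integrals converge and $D(x)=0$, while for $x=0$ the first integral diverges to $+\infty$ and the second equals $0$, so $D(0)=+\infty$. That is, $D$ takes the values of the Dirac delta function: $0$ for $x\ne0$ and $+\infty$ at $x=0$. *)

theory Defs
  imports "HOL-Analysis.Analysis"
begin

definition D1_integrand :: "real \<Rightarrow> real \<Rightarrow> real" where
  "D1_integrand x t =
     (exp (t * x) + t * x * exp (t * x)) / (1 + exp (t * x))^2 - 2 * x * exp (- t * x^2)"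

definition D2_integrand :: "real \<Rightarrow> real \<Rightarrow> real" where
  "D2_integrand x t =
     2 * t * x^3 * exp (- t * x^2) - 2 * t * x * exp (2 * t * x) / (1 + exp (t * x))^3"

definition improper_converges_to :: "(real \<Rightarrow> real) \<Rightarrow> real \<Rightarrow> bool" where
  "improper_converges_to f L \<longleftrightarrow>
     (\<forall>T\<ge>0. f integrable_on {0..T}) \<and> ((\<lambda>T. integral {0..T} f) \<longlongrightarrow> L) at_top"

definition improper_diverges_to_infinity :: "(real \<Rightarrow> real) \<Rightarrow> bool" where
  "improper_diverges_to_infinity f \<longleftrightarrow>
     (\<forall>T\<ge>0. f integrable_on {0..T}) \<and> filterlim (\<lambda>T. integral {0..T} f) at_top at_top"

end

theory Submission
  imports Defs "HOL-Real_Asymp.Real_Asymp"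
begin

text \<open>Substituting \<open>s = t x\<close>, both integrands have elementary primitives built from the logistic
  expressions in \<open>s\<close> and from the Gaussian factor \<open>exp (- t x\<^sup>2)\<close>. For \<open>x \<noteq> 0\<close> the first
  integrand is the derivative of \<open>D1_primitive x\<close>, which has a limit at infinity, and the sum of the
  two integrands is the derivative of \<open>D_primitive x\<close>, which vanishes at \<open>t = 0\<close> and at infinity;
  hence both integrals converge and their sum is \<open>0\<close>. For \<open>x = 0\<close> the first integrand is the
  constant \<open>1/4\<close> and the second one vanishes identically.\<close>

lemma improper_converges_to_primitive:
  assumes "\<And>t. (F has_real_derivative f t) (at t)" and "(F \<longlongrightarrow> L) at_top"
  shows "improper_converges_to f (L - F 0)"
proof -
  have integral: "(f has_integral F T - F 0) {0..T}" if "T \<ge> 0" for T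
    using that assms(1)
    by (intro fundamental_theorem_of_calculus)
       (auto simp: has_real_derivative_iff_has_vector_derivative[symmetric] has_field_derivative_at_within)
  have "\<forall>\<^sub>F T in at_top. F T - F 0 = integral {0..T} f"
    using eventually_ge_at_top[of 0] by eventually_elim (use integral_unique[OF integral] in simp)
  moreover have "((\<lambda>T. F T - F 0) \<longlongrightarrow> L - F 0) at_top"
    using assms(2) by (intro tendsto_intros)
  ultimately have "((\<lambda>T. integral {0..T} f) \<longlongrightarrow> L - F 0) at_top"
    by (rule Lim_transform_eventually[rotated])
  with integral show ?thesis
    unfolding improper_converges_to_def by (blast intro: has_integral_integrable)
qed

lemma improper_converges_to_diff:
  assumes "improper_converges_to f I" and "improper_converges_to g J"
  shows "improper_converges_to (\<lambda>t. f t - g t) (I - J)"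
proof -
  from assms have f: "\<forall>T\<ge>0. f integrable_on {0..T}" and g: "\<forall>T\<ge>0. g integrable_on {0..T}"
    and "((\<lambda>T. integral {0..T} f - integral {0..T} g) \<longlongrightarrow> I - J) at_top"
    unfolding improper_converges_to_def by (auto intro: tendsto_diff)
  moreover have "\<forall>\<^sub>F T in at_top.
      integral {0..T} f - integral {0..T} g = integral {0..T} (\<lambda>t. f t - g t)"
    using eventually_ge_at_top[of 0] by eventually_elim (simp add: f g integral_diff)
  ultimately show ?thesis
    unfolding improper_converges_to_def
    by (auto simp: f g intro: integrable_diff Lim_transform_eventually)
qed

lemma improper_converges_to_zero: "improper_converges_to (\<lambda>t. 0) 0"
  unfolding improper_converges_to_def by (simp add: integrable_0)

lemma improper_diverges_to_infinity_const:
  assumes "c > 0"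
  shows "improper_diverges_to_infinity (\<lambda>t. c)"
proof -
  have eq: "\<forall>\<^sub>F T in at_top. c * T = integral {0..T} (\<lambda>t. c)"
    using eventually_ge_at_top[of 0] by eventually_elim simp
  have "filterlim (\<lambda>T. c * T) at_top at_top"
    using assms by real_asymp
  from filterlim_mono_eventually[OF this order.refl order.refl eq]
  show ?thesis
    unfolding improper_diverges_to_infinity_def by auto
qed

definition logistic_primitive :: "real \<Rightarrow> real" where
  "logistic_primitive s = s * exp s / (1 + exp s) - ln (1 + exp s) - 1 / (1 + exp s)"

definition logistic_moment :: "real \<Rightarrow> real" where
  "logistic_moment s = s * exp s / (1 + exp s)^2"

lemma has_real_derivative_logistic_primitive:
  "(logistic_primitive has_real_derivative (1 + s) * exp s / (1 + exp s)^2) (at s)"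
proof -
  txt \<open>Naming the denominator \<open>1 + exp s\<close> lets \<open>field_simps\<close> see that it is nonzero.\<close>
  define v where "v = 1 + exp s"
  have v: "v > 0" "v \<noteq> 0" "exp s = v - 1"
    unfolding v_def using add_pos_pos[OF zero_less_one exp_gt_zero[of s]] by auto
  show ?thesis unfolding logistic_primitive_def
    by (auto intro!: derivative_eq_intros simp: v field_simps power2_eq_square)
qed

lemma has_real_derivative_logistic_moment:
  "(logistic_moment has_real_derivative
     (1 + s) * exp s / (1 + exp s)^2 - 2 * s * exp (2 * s) / (1 + exp s)^3) (at s)"
proof -
  define v where "v = 1 + exp s"
  have v: "v \<noteq> 0" "exp s = v - 1"
    unfolding v_def using add_pos_pos[OF zero_less_one exp_gt_zero[of s]] by auto
  show ?thesis unfolding logistic_moment_def exp_double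
    by (auto intro!: derivative_eq_intros simp: v field_simps power2_eq_square power3_eq_cube)
qed

lemma logistic_primitive_at_top: "(logistic_primitive \<longlongrightarrow> 0) at_top"
  unfolding logistic_primitive_def by real_asymp

lemma logistic_primitive_at_bot: "(logistic_primitive \<longlongrightarrow> -1) at_bot"
  unfolding logistic_primitive_def by real_asymp

lemma logistic_moment_at_top: "(logistic_moment \<longlongrightarrow> 0) at_top"
  unfolding logistic_moment_def by real_asymp

lemma logistic_moment_at_bot: "(logistic_moment \<longlongrightarrow> 0) at_bot"
  unfolding logistic_moment_def by real_asymp

lemma tendsto_rescale_at_top:
  fixes g :: "real \<Rightarrow> real"
  assumes "x \<noteq> 0" "(g \<longlongrightarrow> a) at_top" "(g \<longlongrightarrow> b) at_bot"
  shows "((\<lambda>t. g (t * x)) \<longlongrightarrow> (if x > 0 then a else b)) at_top"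
proof (cases "x > 0")
  case True
  then have "filterlim (\<lambda>t. t * x) at_top at_top" by real_asymp
  with True show ?thesis using filterlim_compose[OF assms(2)] by simp
next
  case False
  with assms(1) have "filterlim (\<lambda>t. t * x) at_bot at_top" by real_asymp
  with False show ?thesis using filterlim_compose[OF assms(3)] by simp
qed

definition D1_primitive :: "real \<Rightarrow> real \<Rightarrow> real" where
  "D1_primitive x t = (logistic_primitive (t * x) + 2 * exp (- t * x^2)) / x"

definition D_primitive :: "real \<Rightarrow> real \<Rightarrow> real" where
  "D_primitive x t = logistic_moment (t * x) / x - 2 * x * t * exp (- t * x^2)"

lemma has_real_derivative_D1_primitive:
  assumes "x \<noteq> 0"
  shows "(D1_primitive x has_real_derivative D1_integrand x t) (at t)"
proof -
  define v where "v = 1 + exp (t * x)"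
  have v: "v \<noteq> 0" "exp (t * x) = v - 1"
    unfolding v_def using add_pos_pos[OF zero_less_one exp_gt_zero[of "t * x"]] by auto
  show ?thesis unfolding D1_primitive_def
    by (auto intro!: derivative_eq_intros has_real_derivative_logistic_primitive[THEN DERIV_chain2]
        simp: assms v D1_integrand_def field_simps power2_eq_square)
qed

lemma has_real_derivative_D_primitive:
  assumes "x \<noteq> 0"
  shows "(D_primitive x has_real_derivative D1_integrand x t + D2_integrand x t) (at t)"
  unfolding D_primitive_def
  by (auto intro!: derivative_eq_intros has_real_derivative_logistic_moment[THEN DERIV_chain2]
      simp: assms D1_integrand_def D2_integrand_def field_simps power2_eq_square power3_eq_cube)

lemma D1_primitive_at_top:
  assumes "x \<noteq> 0"
  shows "(D1_primitive x \<longlongrightarrow> (if x > 0 then 0 else -1) / x) at_top"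
proof -
  have "((\<lambda>t. exp (- t * c)) \<longlongrightarrow> 0) at_top" if "c > 0" for c :: real
    using that by real_asymp
  then have "((\<lambda>t. exp (- t * x^2)) \<longlongrightarrow> 0) at_top"
    using assms by simp
  from tendsto_add[OF tendsto_rescale_at_top[OF assms logistic_primitive_at_top
      logistic_primitive_at_bot] tendsto_mult_left[OF this, of 2]]
  have "((\<lambda>t. (logistic_primitive (t * x) + 2 * exp (- t * x^2)) / x)
      \<longlongrightarrow> ((if x > 0 then 0 else -1) + 2 * 0) / x) at_top"
    using assms by (rule tendsto_divide[OF _ tendsto_const])
  then show ?thesis
    unfolding D1_primitive_def by simp
qed

lemma D_primitive_at_top:
  assumes "x \<noteq> 0"
  shows "(D_primitive x \<longlongrightarrow> 0) at_top"
proof -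
  have "((\<lambda>t. t * exp (- t * c)) \<longlongrightarrow> 0) at_top" if "c > 0" for c :: real
    using that by real_asymp
  then have "((\<lambda>t. t * exp (- t * x^2)) \<longlongrightarrow> 0) at_top"
    using assms by simp
  from tendsto_diff[OF tendsto_divide[OF tendsto_rescale_at_top[OF assms logistic_moment_at_top
      logistic_moment_at_bot] tendsto_const assms] tendsto_mult_left[OF this, of "2 * x"]]
  have "((\<lambda>t. logistic_moment (t * x) / x - 2 * x * (t * exp (- t * x^2)))
      \<longlongrightarrow> 0 / x - 2 * x * 0) at_top"
    by simp
  then show ?thesis
    unfolding D_primitive_def by (simp add: mult.assoc)
qed

theorem mainTheorem7:
  shows "(\<forall>x::real. x \<noteq> 0 \<longrightarrow>
            (\<exists>I1 I2. improper_converges_to (D1_integrand x) I1 \<and>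
                      improper_converges_to (D2_integrand x) I2 \<and> I1 + I2 = 0))
       \<and> improper_diverges_to_infinity (D1_integrand 0)
       \<and> improper_converges_to (D2_integrand 0) 0"
proof (intro conjI allI impI)
  fix x :: real
  assume x: "x \<noteq> 0"
  define I1 where "I1 = (if x > 0 then 0 else -1) / x - D1_primitive x 0"
  have I1: "improper_converges_to (D1_integrand x) I1"
    unfolding I1_def using has_real_derivative_D1_primitive[OF x] D1_primitive_at_top[OF x]
    by (rule improper_converges_to_primitive)
  have "improper_converges_to (\<lambda>t. D1_integrand x t + D2_integrand x t) 0"
    using improper_converges_to_primitive[OF has_real_derivative_D_primitive[OF x] D_primitive_at_top[OF x]]
    by (simp add: D_primitive_def logistic_moment_def)
  from improper_converges_to_diff[OF this I1]
  have "improper_converges_to (D2_integrand x) (- I1)" by simp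
  with I1 show "\<exists>I1 I2. improper_converges_to (D1_integrand x) I1 \<and>
      improper_converges_to (D2_integrand x) I2 \<and> I1 + I2 = 0"
    by (intro exI[of _ I1] exI[of _ "- I1"]) simp
next
  have "D1_integrand 0 = (\<lambda>t. 1/4)" by (simp add: D1_integrand_def fun_eq_iff)
  then show "improper_diverges_to_infinity (D1_integrand 0)"
    by (simp add: improper_diverges_to_infinity_const)
next
  have "D2_integrand 0 = (\<lambda>t. 0)" by (simp add: D2_integrand_def fun_eq_iff)
  then show "improper_converges_to (D2_integrand 0) 0"
    by (simp add: improper_converges_to_zero)
qed

end
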